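(* Let $Q$ be a finite group and fix integers $g,r\ge 1$. Let $p(Q,g,r,n)$ be the probability that the group $G=\langle a_1,\dots,a_g\mid R_1,\dots,R_r\rangle$ of a random $g$-generator, $r$-relator presentation of complexity $n$ admits an epimorphism onto $Q$. Then $p(Q,g,r,n)$ converges as $n\to\infty$. Moreover, for each $k\ge 0$ the probability that $G$ has exactly $k$ epimorphisms onto $Q$, counted modulo $\mathrm{Aut}(Q)$, also converges as $n\to\infty$.
   Context: A random relator of length (complexity) $n$ in the free group $F_g$ on $a_1,\dots,a_g$ is a word $x_1x_2\cdots x_n$ where each letter $x_j$ is one of $a_i^{\pm1}$ ($1\le i\le g$) or the identity, all $(2g+1)^n$ such words being equally likely. A random presentation of complexity $n$ uses $r$ independent random relators $R_1,\dots,R_r$ of length $n$. Two epimorphisms to $Q$ are identified if they differ by an automorphism of $Q$ (equivalently, one counts normal subgroups with quotient $Q$). *)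

theory Defs
  imports "HOL-Algebra.Algebra" "HOL-Analysis.Analysis"
begin

text \<open>Letters of a word in the free group on a_0,...,a_{g-1} (0-indexed):
  None = identity letter, Some (i, True) = a_i, Some (i, False) = a_i^{-1}.\<close>
type_synonym letter = "(nat \<times> bool) option"

definition letters :: "nat \<Rightarrow> letter set" where
  "letters g = {None} \<union> {Some (i, b) | i b. i < g}"

definition words :: "nat \<Rightarrow> nat \<Rightarrow> letter list set" where
  "words g n = {w. length w = n \<and> set w \<subseteq> letters g}"

definition presentations :: "nat \<Rightarrow> nat \<Rightarrow> nat \<Rightarrow> letter list list set" where
  "presentations g r n = {Rs. length Rs = r \<and> set Rs \<subseteq> words g n}"

definition eval_letter :: "('a, 'b) monoid_scheme \<Rightarrow> (nat \<Rightarrow> 'a) \<Rightarrow> letter \<Rightarrow> 'a" where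
  "eval_letter Q q x = (case x of None \<Rightarrow> \<one>\<^bsub>Q\<^esub>
     | Some (i, True) \<Rightarrow> q i | Some (i, False) \<Rightarrow> inv\<^bsub>Q\<^esub> (q i))"

definition eval_word :: "('a, 'b) monoid_scheme \<Rightarrow> (nat \<Rightarrow> 'a) \<Rightarrow> letter list \<Rightarrow> 'a" where
  "eval_word Q q w = foldr (\<lambda>x acc. eval_letter Q q x \<otimes>\<^bsub>Q\<^esub> acc) w \<one>\<^bsub>Q\<^esub>"

text \<open>Homomorphisms <a_1..a_g | Rs> \<rightarrow> Q, identified (universal property of the
  presentation) with their images of the generators, satisfying all relators.\<close>
definition pres_homs :: "('a, 'b) monoid_scheme \<Rightarrow> nat \<Rightarrow> letter list list \<Rightarrow> (nat \<Rightarrow> 'a) set" where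
  "pres_homs Q g Rs = {q \<in> {..<g} \<rightarrow>\<^sub>E carrier Q. \<forall>R \<in> set Rs. eval_word Q q R = \<one>\<^bsub>Q\<^esub>}"

definition pres_epis :: "('a, 'b) monoid_scheme \<Rightarrow> nat \<Rightarrow> letter list list \<Rightarrow> (nat \<Rightarrow> 'a) set" where
  "pres_epis Q g Rs = {q \<in> pres_homs Q g Rs. generate Q (q ` {..<g}) = carrier Q}"

definition aut_equiv :: "('a, 'b) monoid_scheme \<Rightarrow> nat \<Rightarrow> ((nat \<Rightarrow> 'a) \<times> (nat \<Rightarrow> 'a)) set" where
  "aut_equiv Q g = {(q, q'). \<exists>\<phi> \<in> iso Q Q. q' = (\<lambda>i \<in> {..<g}. \<phi> (q i))}"

definition num_epis_mod_aut :: "('a, 'b) monoid_scheme \<Rightarrow> nat \<Rightarrow> letter list list \<Rightarrow> nat" where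
  "num_epis_mod_aut Q g Rs = card (pres_epis Q g Rs // aut_equiv Q g)"

definition prob_epi :: "('a, 'b) monoid_scheme \<Rightarrow> nat \<Rightarrow> nat \<Rightarrow> nat \<Rightarrow> real" where
  "prob_epi Q g r n = real (card {Rs \<in> presentations g r n. pres_epis Q g Rs \<noteq> {}})
                       / real (card (presentations g r n))"

definition prob_num_epis :: "('a, 'b) monoid_scheme \<Rightarrow> nat \<Rightarrow> nat \<Rightarrow> nat \<Rightarrow> nat \<Rightarrow> real" where
  "prob_num_epis Q g r n k = real (card {Rs \<in> presentations g r n. num_epis_mod_aut Q g Rs = k})
                       / real (card (presentations g r n))"

end

theory Submission
  imports Defs
begin

text \<open>A relator matters only through its values under all assignments of the generators to Q,
  i.e. through one element of the finite group Q^(Q^g), and reading it letter by letter is a random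
  walk on that group whose steps include the identity. Such a lazy walk mixes: after some fixed
  number N of steps every element it can reach at all is hit with probability at least
  (2g+1)^(-N), so the spread of an expected value over the starting points shrinks geometrically
  (Doeblin's argument) and every expectation converges as n grows. Conditioning on the first of r
  independent relators gives the same for functions of all r values, and both the existence and the
  number of epimorphisms modulo Aut(Q) are such functions.\<close>

lemma convergent_between_contracting_bounds:
  fixes lo hi x :: "nat \<Rightarrow> real"
  assumes lo_inc: "incseq lo" and hi_dec: "decseq hi"
    and lo_le: "\<And>m. lo m \<le> x m" and le_hi: "\<And>m. x m \<le> hi m"
    and contract: "\<And>m. hi (N + m) - lo (N + m) \<le> c * (hi m - lo m)" and "c < 1"
  shows "convergent x"
proof -
  have lo_le_hi: "lo m \<le> hi m'" for m m'
    using incseqD[OF lo_inc max.cobounded1[of m m']] decseqD[OF hi_dec max.cobounded2[of m' m]]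
      lo_le[of "max m m'"] le_hi[of "max m m'"]
    by linarith
  then obtain l u where l: "lo \<longlonglongrightarrow> l" and u: "hi \<longlonglongrightarrow> u"
    using incseq_convergent[OF lo_inc, of "hi 0"] decseq_convergent[OF hi_dec, of "lo 0"] by metis
  have "(\<lambda>m. hi (m + N) - lo (m + N)) \<longlonglongrightarrow> u - l"
    using LIMSEQ_ignore_initial_segment[OF u] LIMSEQ_ignore_initial_segment[OF l] by (rule tendsto_diff)
  moreover have "(\<lambda>m. c * (hi m - lo m)) \<longlonglongrightarrow> c * (u - l)"
    using tendsto_diff[OF u l] by (rule tendsto_mult_left)
  moreover have "\<forall>m. hi (m + N) - lo (m + N) \<le> c * (hi m - lo m)"
    using contract by (simp add: add.commute)
  ultimately have "u - l \<le> c * (u - l)"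
    by (blast intro: LIMSEQ_le)
  then have "(1 - c) * (u - l) \<le> 0"
    by (simp add: algebra_simps)
  then have "u \<le> l"
    using \<open>c < 1\<close> by (simp add: mult_le_0_iff)
  moreover have "l \<le> u"
    using LIMSEQ_le[OF l u] lo_le_hi by blast
  ultimately have "hi \<longlonglongrightarrow> l"
    using u by simp
  then have "x \<longlonglongrightarrow> l"
    by (intro tendsto_sandwich[OF _ _ l, of x hi]) (simp_all add: lo_le le_hi)
  then show ?thesis
    by (rule convergentI)
qed

lemma sum_lists_length_Suc:
  assumes "finite A"
  shows "(\<Sum>xs | set xs \<subseteq> A \<and> length xs = Suc n. f xs)
    = (\<Sum>x\<in>A. \<Sum>xs | set xs \<subseteq> A \<and> length xs = n. f (x # xs))"
proof -
  let ?lists = "{xs. set xs \<subseteq> A \<and> length xs = n}"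
  have "inj_on (\<lambda>(xs, x). x # xs) (?lists \<times> A)"
    by (auto intro: inj_onI)
  then have "(\<Sum>xs | set xs \<subseteq> A \<and> length xs = Suc n. f xs) = (\<Sum>(xs, x)\<in>?lists \<times> A. f (x # xs))"
    by (rule sum.reindex_cong[OF _ lists_length_Suc_eq]) auto
  also have "\<dots> = (\<Sum>x\<in>A. \<Sum>xs\<in>?lists. f (x # xs))"
    unfolding sum.cartesian_product[symmetric] by (rule sum.swap)
  finally show ?thesis .
qed

locale lazy_random_walk = group H for H :: "('a, 'm) monoid_scheme" (structure) +
  fixes L :: "'l set" and step :: "'l \<Rightarrow> 'a"
  assumes finite_carrier: "finite (carrier H)"
    and finite_steps: "finite L"
    and step_closed: "step \<in> L \<rightarrow> carrier H"
    and idle_step: "\<exists>e\<in>L. step e = \<one>"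
begin

definition walk :: "'l list \<Rightarrow> 'a" where
  "walk w = foldr (\<lambda>x p. step x \<otimes> p) w \<one>"

definition paths :: "nat \<Rightarrow> 'l list set" where
  "paths n = {w. set w \<subseteq> L \<and> length w = n}"

definition reachable :: "'a set" where
  "reachable = walk ` lists L"

definition mean :: "nat \<Rightarrow> ('a \<Rightarrow> real) \<Rightarrow> real" where
  "mean n F = (\<Sum>w\<in>paths n. F (walk w)) / real (card L) ^ n"

lemma walk_Nil [simp]: "walk [] = \<one>"
  and walk_Cons [simp]: "walk (x # w) = step x \<otimes> walk w"
  by (simp_all add: walk_def)

lemma step_in_carrier [simp]: "x \<in> L \<Longrightarrow> step x \<in> carrier H"
  using step_closed by blast

lemma walk_closed: "set w \<subseteq> L \<Longrightarrow> walk w \<in> carrier H"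
  by (induction w) auto

lemma walk_append: "set u \<subseteq> L \<Longrightarrow> set v \<subseteq> L \<Longrightarrow> walk (u @ v) = walk u \<otimes> walk v"
  by (induction u) (auto simp: m_assoc walk_closed)

lemma card_steps_pos: "card L > 0"
  using idle_step finite_steps card_gt_0_iff by blast

lemma finite_paths: "finite (paths n)"
  unfolding paths_def using finite_lists_length_eq[OF finite_steps] .

lemma paths_0: "paths 0 = {[]}"
  by (auto simp: paths_def)

lemma card_paths: "card (paths n) = card L ^ n"
  unfolding paths_def using card_lists_length_eq[OF finite_steps] .

lemma reachable_subset_carrier: "reachable \<subseteq> carrier H"
  unfolding reachable_def using walk_closed by auto

lemma reachable_carrier: "a \<in> reachable \<Longrightarrow> a \<in> carrier H"
  using reachable_subset_carrier by blast

lemma finite_reachable: "finite reachable"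
  using finite_subset[OF reachable_subset_carrier finite_carrier] .

lemma one_reachable: "\<one> \<in> reachable"
  unfolding reachable_def by (auto intro: image_eqI[where x = "[]"])

lemma walk_reachable: "set w \<subseteq> L \<Longrightarrow> walk w \<in> reachable"
  unfolding reachable_def by auto

lemma reachable_mult:
  assumes "a \<in> reachable" and "b \<in> reachable"
  shows "a \<otimes> b \<in> reachable"
proof -
  obtain u v where "set u \<subseteq> L" "set v \<subseteq> L" "a = walk u" "b = walk v"
    using assms unfolding reachable_def by (auto simp: in_lists_conv_set subset_iff)
  then show ?thesis
    using walk_reachable[of "u @ v"] by (simp add: walk_append)
qed

lemma sum_reachable_mult_left:
  assumes "a \<in> reachable"
  shows "(\<Sum>k\<in>reachable. f (a \<otimes> k)) = (\<Sum>k\<in>reachable. f k)"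
proof -
  have inj: "inj_on (\<lambda>k. a \<otimes> k) reachable"
    using inj_on_cmult assms reachable_subset_carrier inj_on_subset by blast
  then have "(\<lambda>k. a \<otimes> k) ` reachable = reachable"
    using endo_inj_surj finite_reachable reachable_mult assms by blast
  then show ?thesis
    using sum.reindex[OF inj, of f] by simp
qed

lemma walk_replicate_idle: "step e = \<one> \<Longrightarrow> walk (replicate n e) = \<one>"
  by (induction n) auto

lemma reachable_in_uniform_time: obtains N where "walk ` paths N = reachable"
proof -
  obtain e where e: "e \<in> L" "step e = \<one>"
    using idle_step by blast
  have "\<forall>k\<in>reachable. \<exists>w. set w \<subseteq> L \<and> walk w = k"
    unfolding reachable_def by (auto simp: in_lists_conv_set)
  then obtain f where f: "\<forall>k\<in>reachable. set (f k) \<subseteq> L \<and> walk (f k) = k"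
    by (rule bchoice[THEN exE])
  define N where "N = Max (length ` f ` reachable)"
  have "k \<in> walk ` paths N" if k: "k \<in> reachable" for k
  proof
    let ?padding = "replicate (N - length (f k)) e"
    have fk: "set (f k) \<subseteq> L" "walk (f k) = k"
      using f k by auto
    have "length (f k) \<le> N"
      unfolding N_def using k finite_reachable by auto
    then show "f k @ ?padding \<in> paths N"
      using fk e by (auto simp: paths_def)
    have "walk (f k @ ?padding) = walk (f k) \<otimes> walk ?padding"
      using fk e by (intro walk_append) auto
    then show "k = walk (f k @ ?padding)"
      using fk e reachable_carrier[OF k] by (simp add: walk_replicate_idle)
  qed
  moreover have "walk ` paths N \<subseteq> reachable"
    unfolding paths_def using walk_reachable by auto
  ultimately show ?thesis
    using that by blast
qed

lemma mean_cong: "(\<And>a. a \<in> reachable \<Longrightarrow> F a = G a) \<Longrightarrow> mean n F = mean n G"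
  unfolding mean_def paths_def by (auto intro!: sum.cong arg_cong[where f = "\<lambda>s. s / _"] walk_reachable)

lemma mean_mono: "(\<And>a. a \<in> reachable \<Longrightarrow> F a \<le> G a) \<Longrightarrow> mean n F \<le> mean n G"
  unfolding mean_def paths_def by (auto intro!: sum_mono divide_right_mono walk_reachable)

lemma mean_const [simp]: "mean n (\<lambda>_. c) = c"
  using card_steps_pos by (simp add: mean_def card_paths)

lemma mean_diff: "mean n (\<lambda>a. F a - G a) = mean n F - mean n G"
  unfolding mean_def by (simp add: sum_subtractf diff_divide_distrib)

lemma mean_0: "mean 0 F = F \<one>"
  by (simp add: mean_def paths_0)

lemma mean_Suc: "mean (Suc n) F = (\<Sum>x\<in>L. mean n (\<lambda>b. F (step x \<otimes> b))) / real (card L)"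
  unfolding mean_def paths_def sum_lists_length_Suc[OF finite_steps]
  by (simp add: sum_divide_distrib field_simps)

lemma mean_add: "mean (n + m) F = mean n (\<lambda>a. mean m (\<lambda>b. F (a \<otimes> b)))"
proof (induction n arbitrary: F)
  case 0
  have "mean m F = mean m (\<lambda>b. F (\<one> \<otimes> b))"
    by (rule mean_cong) (simp add: reachable_carrier)
  then show ?case
    by (simp add: mean_0)
next
  case (Suc n)
  have "mean (Suc n + m) F = (\<Sum>x\<in>L. mean n (\<lambda>a. mean m (\<lambda>b. F (step x \<otimes> (a \<otimes> b))))) / real (card L)"
    by (simp add: mean_Suc Suc.IH)
  also have "\<dots> = (\<Sum>x\<in>L. mean n (\<lambda>a. mean m (\<lambda>b. F (step x \<otimes> a \<otimes> b)))) / real (card L)"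
    by (intro arg_cong[where f = "\<lambda>s. s / _"] sum.cong refl mean_cong) (simp add: m_assoc reachable_carrier)
  also have "\<dots> = mean (Suc n) (\<lambda>a. mean m (\<lambda>b. F (a \<otimes> b)))"
    by (simp add: mean_Suc)
  finally show ?case .
qed

lemma mean_ge_sum_reachable:
  assumes uniform: "walk ` paths N = reachable" and nonneg: "\<And>a. a \<in> reachable \<Longrightarrow> 0 \<le> F a"
  shows "(\<Sum>a\<in>reachable. F a) / real (card L) ^ N \<le> mean N F"
proof -
  have "sum F (walk ` paths N) \<le> sum (F \<circ> walk) (paths N)"
    by (rule sum_image_le[OF finite_paths]) (use nonneg uniform in auto)
  then have "(\<Sum>a\<in>reachable. F a) \<le> (\<Sum>w\<in>paths N. F (walk w))"
    by (simp add: uniform)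
  then show ?thesis
    unfolding mean_def by (simp add: divide_right_mono)
qed

context
  fixes F :: "'a \<Rightarrow> real"
begin

definition mean_from :: "nat \<Rightarrow> 'a \<Rightarrow> real" where
  "mean_from m a = mean m (\<lambda>b. F (a \<otimes> b))"

definition max_mean_from :: "nat \<Rightarrow> real" where
  "max_mean_from m = Max (mean_from m ` reachable)"

definition min_mean_from :: "nat \<Rightarrow> real" where
  "min_mean_from m = Min (mean_from m ` reachable)"

lemma mean_from_add:
  assumes "a \<in> reachable"
  shows "mean_from (n + m) a = mean n (\<lambda>b. mean_from m (a \<otimes> b))"
  unfolding mean_from_def mean_add using assms
  by (intro mean_cong) (simp add: m_assoc reachable_carrier reachable_mult)

lemma min_le_mean_from: "a \<in> reachable \<Longrightarrow> min_mean_from m \<le> mean_from m a"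
  and mean_from_le_max: "a \<in> reachable \<Longrightarrow> mean_from m a \<le> max_mean_from m"
  unfolding min_mean_from_def max_mean_from_def using finite_reachable by auto

lemma incseq_min_mean_from: "incseq min_mean_from"
proof (rule incseq_SucI)
  fix m
  have bound: "min_mean_from m \<le> mean_from (1 + m) a" if "a \<in> reachable" for a
    unfolding mean_from_add[OF that] using that mean_mono[of "\<lambda>_. min_mean_from m"]
    by (simp add: min_le_mean_from reachable_mult)
  show "min_mean_from m \<le> min_mean_from (Suc m)"
    unfolding min_mean_from_def[of "Suc m"]
    by (rule Min.boundedI) (use finite_reachable one_reachable bound in auto)
qed

lemma decseq_max_mean_from: "decseq max_mean_from"
proof (rule decseq_SucI)
  fix m
  have bound: "mean_from (1 + m) a \<le> max_mean_from m" if "a \<in> reachable" for a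
    unfolding mean_from_add[OF that] using that mean_mono[of _ "\<lambda>_. max_mean_from m"]
    by (simp add: mean_from_le_max reachable_mult)
  show "max_mean_from (Suc m) \<le> max_mean_from m"
    unfolding max_mean_from_def[of "Suc m"]
    by (rule Max.boundedI) (use finite_reachable one_reachable bound in auto)
qed

lemma mean_from_spread_contracts:
  assumes uniform: "walk ` paths N = reachable"
  defines "c \<equiv> 1 - real (card reachable) / real (card L) ^ N"
  shows "max_mean_from (N + m) - min_mean_from (N + m) \<le> c * (max_mean_from m - min_mean_from m)"
proof -
  define S where "S = (\<Sum>k\<in>reachable. mean_from m k)"
  define K where "K = real (card reachable)"
  define B where "B = real (card L) ^ N"
  have "B > 0"
    unfolding B_def using card_steps_pos by simp
  have lower: "min_mean_from m + (S - K * min_mean_from m) / B \<le> mean_from (N + m) a"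
    and upper: "mean_from (N + m) a \<le> max_mean_from m - (K * max_mean_from m - S) / B"
    if a: "a \<in> reachable" for a
  proof -
    have translate: "(\<Sum>k\<in>reachable. mean_from m (a \<otimes> k)) = S"
      unfolding S_def using sum_reachable_mult_left[OF a] .
    have "(S - K * min_mean_from m) / B = (\<Sum>k\<in>reachable. mean_from m (a \<otimes> k) - min_mean_from m) / B"
      by (simp add: sum_subtractf translate K_def)
    also have "\<dots> \<le> mean N (\<lambda>k. mean_from m (a \<otimes> k) - min_mean_from m)"
      unfolding B_def using a
      by (intro mean_ge_sum_reachable[OF uniform]) (simp add: min_le_mean_from reachable_mult)
    also have "\<dots> = mean_from (N + m) a - min_mean_from m"
      by (simp add: mean_diff mean_from_add[OF a])
    finally show "min_mean_from m + (S - K * min_mean_from m) / B \<le> mean_from (N + m) a"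
      by simp
    have "(K * max_mean_from m - S) / B = (\<Sum>k\<in>reachable. max_mean_from m - mean_from m (a \<otimes> k)) / B"
      by (simp add: sum_subtractf translate K_def)
    also have "\<dots> \<le> mean N (\<lambda>k. max_mean_from m - mean_from m (a \<otimes> k))"
      unfolding B_def using a
      by (intro mean_ge_sum_reachable[OF uniform]) (simp add: mean_from_le_max reachable_mult)
    also have "\<dots> = max_mean_from m - mean_from (N + m) a"
      by (simp add: mean_diff mean_from_add[OF a])
    finally show "mean_from (N + m) a \<le> max_mean_from m - (K * max_mean_from m - S) / B"
      by simp
  qed
  have "max_mean_from (N + m) \<le> max_mean_from m - (K * max_mean_from m - S) / B"
    unfolding max_mean_from_def[of "N + m"]
    by (rule Max.boundedI) (use finite_reachable one_reachable upper in auto)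
  moreover have "min_mean_from m + (S - K * min_mean_from m) / B \<le> min_mean_from (N + m)"
    unfolding min_mean_from_def[of "N + m"]
    by (rule Min.boundedI) (use finite_reachable one_reachable lower in auto)
  ultimately show ?thesis
    unfolding c_def K_def[symmetric] B_def[symmetric] using \<open>B > 0\<close> by (simp add: field_simps)
qed

lemma convergent_mean: "convergent (\<lambda>n. mean n F)"
proof -
  obtain N where uniform: "walk ` paths N = reachable"
    using reachable_in_uniform_time by blast
  have mean_eq: "mean m F = mean_from m \<one>" for m
    unfolding mean_from_def by (rule mean_cong) (simp add: reachable_carrier)
  have "card reachable > 0"
    using finite_reachable one_reachable card_gt_0_iff by blast
  then have "0 < real (card reachable) / real (card L) ^ N"
    using card_steps_pos by simp
  then show ?thesis
    unfolding mean_eq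
    by (intro convergent_between_contracting_bounds[OF incseq_min_mean_from decseq_max_mean_from
          min_le_mean_from mean_from_le_max mean_from_spread_contracts[OF uniform]] one_reachable)
      auto
qed

end

lemma abs_mean_diff_le:
  assumes "\<And>a. a \<in> reachable \<Longrightarrow> \<bar>F a - G a\<bar> \<le> e"
  shows "\<bar>mean n F - mean n G\<bar> \<le> e"
proof -
  have bounds: "F a - G a \<le> e" "G a - F a \<le> e" if "a \<in> reachable" for a
    using assms[OF that] by auto
  have "mean n (\<lambda>a. F a - G a) \<le> mean n (\<lambda>_. e)"
    by (rule mean_mono) (rule bounds)
  moreover have "mean n (\<lambda>a. G a - F a) \<le> mean n (\<lambda>_. e)"
    by (rule mean_mono) (rule bounds)
  ultimately show ?thesis
    by (simp add: mean_diff)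
qed

lemma convergent_mean_of_tendsto:
  assumes "\<And>a. a \<in> reachable \<Longrightarrow> (\<lambda>n. F n a) \<longlonglongrightarrow> G a"
  shows "convergent (\<lambda>n. mean n (F n))"
proof -
  obtain l where l: "(\<lambda>n. mean n G) \<longlonglongrightarrow> l"
    using convergent_mean[of G] by (auto simp: convergent_def)
  define e where "e n = (\<Sum>a\<in>reachable. \<bar>F n a - G a\<bar>)" for n
  have "e \<longlonglongrightarrow> (\<Sum>a\<in>reachable. \<bar>G a - G a\<bar>)"
    unfolding e_def by (intro tendsto_intros assms)
  then have e: "e \<longlonglongrightarrow> 0"
    by simp
  have "\<bar>mean n (F n) - mean n G\<bar> \<le> e n" for n
    unfolding e_def using finite_reachable by (intro abs_mean_diff_le member_le_sum) auto
  then have "(\<lambda>n. mean n (F n) - mean n G) \<longlonglongrightarrow> 0"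
    by (intro Lim_null_comparison[OF _ e]) auto
  from tendsto_add[OF this l] show ?thesis
    by (auto intro: convergentI)
qed

definition joint_prob :: "nat \<Rightarrow> ('a list \<Rightarrow> bool) \<Rightarrow> nat \<Rightarrow> real" where
  "joint_prob r P n = real (card {ws. set ws \<subseteq> paths n \<and> length ws = r \<and> P (map walk ws)})
    / (real (card L) ^ n) ^ r"

lemma joint_prob_0: "joint_prob 0 P n = of_bool (P [])"
proof -
  have "{ws. set ws \<subseteq> paths n \<and> length ws = 0 \<and> P (map walk ws)} = (if P [] then {[]} else {})"
    by auto
  then show ?thesis
    by (simp add: joint_prob_def)
qed

lemma joint_prob_Suc: "joint_prob (Suc r) P n = mean n (\<lambda>h. joint_prob r (\<lambda>hs. P (h # hs)) n)"
proof -
  have card_eq: "real (card {ws. set ws \<subseteq> paths n \<and> length ws = s \<and> Q ws})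
      = (\<Sum>ws | set ws \<subseteq> paths n \<and> length ws = s. of_bool (Q ws))" for s Q
    using finite_lists_length_eq[OF finite_paths] by (simp add: Collect_conj_eq[symmetric] Int_def)
  show ?thesis
    unfolding joint_prob_def mean_def card_eq sum_lists_length_Suc[OF finite_paths]
    by (simp add: sum_divide_distrib field_simps)
qed

lemma convergent_joint_prob: "convergent (\<lambda>n. joint_prob r P n)"
proof (induction r arbitrary: P)
  case 0
  show ?case
    by (simp add: joint_prob_0 convergent_const)
next
  case (Suc r)
  show ?case
    unfolding joint_prob_Suc using Suc.IH
    by (intro convergent_mean_of_tendsto) (simp add: convergent_LIMSEQ_iff)
qed

end

lemma finite_letters: "finite (letters g)"
proof -
  have "letters g \<subseteq> insert None (Some ` ({..<g} \<times> UNIV))"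
    unfolding letters_def by auto
  then show ?thesis
    by (rule finite_subset) simp
qed

locale random_presentation = group G for G :: "('a, 'b) monoid_scheme" (structure) +
  fixes g :: nat
  assumes finite_group: "finite (carrier G)"
begin

abbreviation assignments :: "(nat \<Rightarrow> 'a) set" where
  "assignments \<equiv> {..<g} \<rightarrow>\<^sub>E carrier G"

text \<open>A word is recorded by the tuple of its values under all assignments of the generators; the
  identity letter is the idle step of the resulting walk.\<close>

abbreviation value_group :: "((nat \<Rightarrow> 'a) \<Rightarrow> 'a) monoid" where
  "value_group \<equiv> product_group assignments (\<lambda>_. G)"

definition letter_value :: "letter \<Rightarrow> (nat \<Rightarrow> 'a) \<Rightarrow> 'a" where
  "letter_value x = (\<lambda>q\<in>assignments. eval_letter G q x)"

lemma eval_letter_closed: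
  assumes "q \<in> assignments" and "x \<in> letters g"
  shows "eval_letter G q x \<in> carrier G"
  using assms unfolding letters_def eval_letter_def by (auto simp: PiE_iff split: bool.split)

sublocale W: lazy_random_walk value_group "letters g" letter_value
proof (intro lazy_random_walk.intro lazy_random_walk_axioms.intro)
  show "group value_group"
    by (simp add: is_group)
  show "finite (carrier value_group)"
    using finite_group by (simp add: finite_PiE)
  show "finite (letters g)"
    by (rule finite_letters)
  show "letter_value \<in> letters g \<rightarrow> carrier value_group"
    using eval_letter_closed by (auto simp: letter_value_def)
  have "letter_value None = \<one>\<^bsub>value_group\<^esub>"
    by (simp add: letter_value_def eval_letter_def)
  then show "\<exists>e\<in>letters g. letter_value e = \<one>\<^bsub>value_group\<^esub>"
    unfolding letters_def by blast
qed

lemma walk_eq_eval_word: "W.walk w = (\<lambda>q\<in>assignments. eval_word G q w)"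
proof (induction w)
  case Nil
  show ?case
    by (simp only: W.walk_Nil) (simp add: eval_word_def)
next
  case (Cons x w)
  show ?case
    by (simp only: W.walk_Cons Cons.IH) (auto simp: letter_value_def eval_word_def)
qed

definition epis_with_relator_values :: "((nat \<Rightarrow> 'a) \<Rightarrow> 'a) list \<Rightarrow> (nat \<Rightarrow> 'a) set" where
  "epis_with_relator_values hs =
    {q \<in> assignments. (\<forall>h\<in>set hs. h q = \<one>) \<and> generate G (q ` {..<g}) = carrier G}"

lemma pres_epis_eq: "pres_epis G g Rs = epis_with_relator_values (map W.walk Rs)"
  unfolding pres_epis_def pres_homs_def epis_with_relator_values_def by (auto simp: walk_eq_eval_word)

lemma presentations_eq: "presentations g r n = {Rs. set Rs \<subseteq> W.paths n \<and> length Rs = r}"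
  unfolding presentations_def words_def W.paths_def by (auto simp: conj_commute)

lemma prob_pres_epis_eq_joint_prob:
  "real (card {Rs \<in> presentations g r n. P (pres_epis G g Rs)}) / real (card (presentations g r n))
    = W.joint_prob r (\<lambda>hs. P (epis_with_relator_values hs)) n"
proof -
  have "card (presentations g r n) = (card (letters g) ^ n) ^ r"
    by (simp only: presentations_eq card_lists_length_eq[OF W.finite_paths] W.card_paths)
  moreover have "{Rs \<in> presentations g r n. P (pres_epis G g Rs)}
      = {ws. set ws \<subseteq> W.paths n \<and> length ws = r \<and> P (epis_with_relator_values (map W.walk ws))}"
    unfolding presentations_eq pres_epis_eq by auto
  ultimately show ?thesis
    unfolding W.joint_prob_def by simp
qed

end

theorem proposition3p2:
  fixes Q :: "('a, 'b) monoid_scheme" and g r :: nat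
  assumes "group Q" and "finite (carrier Q)" and "g \<ge> 1" and "r \<ge> 1"
  shows "convergent (\<lambda>n. prob_epi Q g r n)
    \<and> (\<forall>k. convergent (\<lambda>n. prob_num_epis Q g r n k))"
proof -
  interpret random_presentation Q g
    using assms(1,2) by (intro random_presentation.intro random_presentation_axioms.intro)
  have "prob_epi Q g r n = W.joint_prob r (\<lambda>hs. epis_with_relator_values hs \<noteq> {}) n" for n
    unfolding prob_epi_def by (rule prob_pres_epis_eq_joint_prob[where P = "\<lambda>E. E \<noteq> {}"])
  moreover have "prob_num_epis Q g r n k
      = W.joint_prob r (\<lambda>hs. card (epis_with_relator_values hs // aut_equiv Q g) = k) n" for n k
    unfolding prob_num_epis_def num_epis_mod_aut_def
    by (rule prob_pres_epis_eq_joint_prob[where P = "\<lambda>E. card (E // aut_equiv Q g) = k"])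
  ultimately show ?thesis
    using W.convergent_joint_prob by simp
qed

end
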